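(* Let $\mathbf{E},\mathbf{Y}$ be Euclidean spaces, $\mathcal{X}\subset\mathbf{E}$ nonempty closed convex, $h\colon\mathbf{Y}\to\mathbb{R}$ convex, $F\colon\mathbf{E}\to\mathbf{Y}$ differentiable with Jacobian $\nabla F(x)$, and $f=h\circ F$. Let $\mathcal{X}^*=\operatorname{argmin}_{\mathcal{X}}f$ be nonempty and fix $\bar x\in\mathcal{X}^*$. Suppose for some $\epsilon,\mu,\rho>0$: (approximation) $|f(y)-f_x(y)|\le\frac\rho2\|y-x\|^2$ for all $x\in\mathcal{X}\cap B_\epsilon(\bar x)$, $y\in\mathcal{X}$, where $f_x(y):=h(F(x)+\nabla F(x)(y-x))$; (sharpness) $f(x)-\inf_{\mathcal{X}}f\ge\mu\,\mathrm{dist}(x,\mathcal{X}^* )$ for all $x\in\mathcal{X}\cap B_\epsilon(\bar x)$. Let $\beta\ge\rho$ and let $x_0\in B_{\epsilon/2}(\bar x)\cap\mathcal{X}$ satisfy $$f(x_0)-\min_{\mathcal{X}}f\le\min\Big\{\frac{\beta\epsilon^2}{25},\frac{\mu^2}{2\beta}\Big\}.$$ Consider the prox-linear iterates $x_{k+1}=\operatorname{argmin}_{x\in\mathcal{X}}\big\{h\big(F(x_k)+\nabla F(x_k)(x-x_k)\big)+\frac\beta2\|x-x_k\|^2\big\}$. Then all $x_k$ lie in $B_\epsilon(\bar x)$ and for all $k\ge0$ $$\mathrm{dist}(x_{k+1},\mathcal{X}^* )\le\frac\beta\mu\mathrm{dist}^2(x_k,\mathcal{X}^* ),\qquad f(x_{k+1})-\min_{\mathcal{X}}f\le\frac{\beta}{\mu^2}\big(f(x_k)-\min_{\mathcal{X}}f\big)^2.$$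 Moreover, the iterates converge to some $x_\infty\in\mathcal{X}^*$ with $\|x_k-x_\infty\|\le\frac{2\sqrt2\mu}{\beta}\big(\frac12\big)^{2^{k-1}}$ for all $k\ge0$.
   Context: $\|\cdot\|$ is the Euclidean norm on $\mathbf{E}$, $B_\epsilon(z)$ the closed ball of radius $\epsilon$ about $z$, and $\mathrm{dist}$ the Euclidean distance. *)

theory Defs
  imports "HOL-Analysis.Analysis"
begin

end

theory Submission
  imports Defs
begin

text \<open>
  The model \<open>f\<^sub>x\<close> is convex, so adding the \<open>\<beta>\<close>-strongly convex proximal term makes the new
  iterate beat every competitor \<open>y\<close> by \<open>\<beta>/2 \<parallel>y - x\<^sub>k\<^sub>+\<^sub>1\<parallel>\<^sup>2\<close>; with the two-sided
  quadratic error of the model this gives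
  \<open>f(x\<^sub>k\<^sub>+\<^sub>1) + \<beta>/2 \<parallel>y - x\<^sub>k\<^sub>+\<^sub>1\<parallel>\<^sup>2 \<le> f(y) + \<beta> \<parallel>y - x\<^sub>k\<parallel>\<^sup>2\<close>.
  Taking for \<open>y\<close> a nearest minimizer of \<open>x\<^sub>k\<close> bounds both the new gap and the step length
  by the distance \<open>d\<^sub>k\<close> of \<open>x\<^sub>k\<close> to the solution set, and sharpness closes the loop:
  \<open>\<mu> d\<^sub>k\<^sub>+\<^sub>1 \<le> f(x\<^sub>k\<^sub>+\<^sub>1) - min f \<le> \<beta> d\<^sub>k\<^sup>2\<close>. All of this needs \<open>x\<^sub>k\<close> to lie in the ball where the
  hypotheses hold. By induction \<open>\<beta>/\<mu> d\<^sub>k \<le> t^(2^k)\<close> with \<open>t \<le> 1/2\<close>, so the steps have total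
  length at most \<open>\<epsilon>/2\<close>, which keeps every iterate in the ball and makes the sequence Cauchy
  with doubly exponentially small tails.
\<close>

definition minimizers :: "'a set \<Rightarrow> ('a \<Rightarrow> real) \<Rightarrow> 'a set" where
  "minimizers X f = {z \<in> X. \<forall>y\<in>X. f z \<le> f y}"

lemma closed_minimizers:
  fixes f :: "'a::topological_space \<Rightarrow> real"
  assumes "closed X" and "continuous_on X f"
  shows "closed (minimizers X f)"
proof (cases "minimizers X f = {}")
  case False
  then obtain z where "z \<in> minimizers X f" by blast
  then have "minimizers X f = X \<inter> f -` {..f z}"
    by (auto simp: minimizers_def intro: order_trans)
  then show ?thesis
    using continuous_closed_preimage[OF assms(2,1) closed_atMost] by simp
qed simp

lemma infdist_attained:
  fixes a :: "'a::heine_borel"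
  assumes "closed S" and "S \<noteq> {}"
  obtains z where "z \<in> S" and "infdist a S = dist a z"
proof -
  obtain z where z: "z \<in> S" "\<And>y. y \<in> S \<Longrightarrow> dist a z \<le> dist a y"
    using distance_attains_inf[OF assms] by blast
  have "dist a z \<le> infdist a S"
    unfolding infdist_notempty[OF assms(2)] by (rule cINF_greatest[OF assms(2) z(2)])
  with infdist_le[OF z(1)] have "infdist a S = dist a z" by (rule antisym)
  with z(1) show thesis by (rule that)
qed

lemma convex_on_affine_comp:
  assumes "convex_on UNIV h" and "linear L" and "convex S"
  shows "convex_on S (\<lambda>y. h (b + L (y - c)))"
proof (rule convex_onI[OF _ assms(3)])
  fix t :: real and u v assume t: "0 < t" "t < 1"
  have "b + L ((1 - t) *\<^sub>R u + t *\<^sub>R v - c)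
      = (1 - t) *\<^sub>R (b + L (u - c)) + t *\<^sub>R (b + L (v - c))"
  proof -
    have "(1 - t) *\<^sub>R u + t *\<^sub>R v - c = (1 - t) *\<^sub>R (u - c) + t *\<^sub>R (v - c)"
      by (simp add: algebra_simps)
    then have "L ((1 - t) *\<^sub>R u + t *\<^sub>R v - c) = (1 - t) *\<^sub>R L (u - c) + t *\<^sub>R L (v - c)"
      using assms(2) by (simp add: linear_add linear_scale)
    then show ?thesis by (simp add: algebra_simps)
  qed
  then show "h (b + L ((1 - t) *\<^sub>R u + t *\<^sub>R v - c))
      \<le> (1 - t) * h (b + L (u - c)) + t * h (b + L (v - c))"
    using convex_onD[OF assms(1), of t] t by simp
qed

lemma norm_convex_combination_diff_sq:
  fixes a b c :: "'a::real_inner"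
  shows "(norm ((1 - t) *\<^sub>R a + t *\<^sub>R b - c))\<^sup>2
    = (1 - t) * (norm (a - c))\<^sup>2 + t * (norm (b - c))\<^sup>2 - t * (1 - t) * (norm (b - a))\<^sup>2"
proof -
  define A B where "A = a - c" and "B = b - c"
  have "(1 - t) *\<^sub>R a + t *\<^sub>R b - c = A + t *\<^sub>R (B - A)" and "b - a = B - A"
    by (simp_all add: A_def B_def algebra_simps)
  then show ?thesis
    unfolding A_def[symmetric] B_def[symmetric]
    by (simp add: power2_norm_eq_inner inner_diff_left inner_diff_right inner_add_left
        inner_add_right inner_commute) (simp add: algebra_simps)
qed

text \<open>
  The minimizer of a convex function plus \<open>\<beta>/2 \<parallel>\<cdot> - c\<parallel>\<^sup>2\<close> beats every competitor by
  \<open>\<beta>/2 \<parallel>y - xp\<parallel>\<^sup>2\<close>: compare with the points \<open>(1 - t) xp + t y\<close> and let \<open>t \<rightarrow> 0\<close>.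
\<close>

lemma prox_three_point:
  fixes m :: "'a::real_inner \<Rightarrow> real"
  assumes m: "convex_on S m" and \<beta>: "\<beta> \<ge> 0" and xp: "xp \<in> S" and y: "y \<in> S"
    and opt: "\<And>y. y \<in> S \<Longrightarrow> m xp + \<beta>/2 * (norm (xp - c))\<^sup>2 \<le> m y + \<beta>/2 * (norm (y - c))\<^sup>2"
  shows "m xp + \<beta>/2 * (norm (xp - c))\<^sup>2 + \<beta>/2 * (norm (y - xp))\<^sup>2 \<le> m y + \<beta>/2 * (norm (y - c))\<^sup>2"
proof -
  define P Q D where "P = m xp + \<beta>/2 * (norm (xp - c))\<^sup>2"
    and "Q = m y + \<beta>/2 * (norm (y - c))\<^sup>2" and "D = \<beta>/2 * (norm (y - xp))\<^sup>2"
  have "P \<le> Q - (1 - t) * D" if t: "0 < t" "t < 1" for t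
  proof -
    define w where "w = (1 - t) *\<^sub>R xp + t *\<^sub>R y"
    have "w \<in> S"
      using convex_on_imp_convex[OF m] xp y t unfolding w_def by (simp add: convex_alt)
    then have "P \<le> m w + \<beta>/2 * (norm (w - c))\<^sup>2" unfolding P_def by (rule opt)
    also have "\<dots> \<le> (1 - t) * m xp + t * m y + \<beta>/2 * ((1 - t) * (norm (xp - c))\<^sup>2
        + t * (norm (y - c))\<^sup>2 - t * (1 - t) * (norm (y - xp))\<^sup>2)"
      using convex_onD[OF m, of t xp y] t xp y
      unfolding w_def norm_convex_combination_diff_sq by simp
    also have "\<dots> = (1 - t) * P + t * (Q - (1 - t) * D)"
      by (simp add: P_def Q_def D_def field_simps)
    finally have "t * P \<le> t * (Q - (1 - t) * D)" by (simp add: algebra_simps)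
    then show ?thesis using t by simp
  qed
  then have "\<forall>\<^sub>F t in at_right 0. P \<le> Q - (1 - t) * D"
    by (auto simp: eventually_at_right_field intro!: exI[of _ 1])
  moreover have "((\<lambda>t. Q - (1 - t) * D) \<longlongrightarrow> Q - D) (at_right 0)"
    by (auto intro!: tendsto_eq_intros)
  ultimately have "P \<le> Q - D"
    by (intro tendsto_lowerbound[where F = "at_right (0::real)"]) auto
  then show ?thesis by (simp add: P_def Q_def D_def)
qed

lemma model_step_descent:
  fixes f m :: "'a::real_inner \<Rightarrow> real"
  assumes m: "convex_on S m" and \<beta>: "\<beta> \<ge> 0"
    and approx: "\<And>y. y \<in> S \<Longrightarrow> \<bar>f y - m y\<bar> \<le> \<beta>/2 * (norm (y - c))\<^sup>2"
    and xp: "xp \<in> S" and y: "y \<in> S"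
    and opt: "\<And>y. y \<in> S \<Longrightarrow> m xp + \<beta>/2 * (norm (xp - c))\<^sup>2 \<le> m y + \<beta>/2 * (norm (y - c))\<^sup>2"
  shows "f xp + \<beta>/2 * (norm (y - xp))\<^sup>2 \<le> f y + \<beta> * (norm (y - c))\<^sup>2"
  using prox_three_point[OF m \<beta> xp y opt] abs_le_D1[OF approx[OF xp]] abs_le_D2[OF approx[OF y]]
  by simp

lemma sum_power_two_powers_le_quarter:
  fixes a :: real
  assumes "0 \<le> a" and "a \<le> 1/4"
  shows "(\<Sum>m<n. a ^ 2 ^ m) \<le> a + 16/15 * a\<^sup>2"
  using assms
proof (induction n arbitrary: a)
  case (Suc n)
  have small: "a\<^sup>2 \<le> 1/16"
    using power_mono[OF Suc.prems(2) Suc.prems(1), of 2] by (simp add: power_divide)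
  have "(a\<^sup>2)\<^sup>2 \<le> a\<^sup>2 * (1/16)"
    unfolding power2_eq_square[of "a\<^sup>2"] using small by (intro mult_left_mono) auto
  moreover have "(\<Sum>m<n. (a\<^sup>2) ^ 2 ^ m) \<le> a\<^sup>2 + 16/15 * (a\<^sup>2)\<^sup>2"
    using small by (intro Suc.IH) auto
  moreover have "(\<Sum>m<Suc n. a ^ 2 ^ m) = a + (\<Sum>m<n. (a\<^sup>2) ^ 2 ^ m)"
    unfolding sum.lessThan_Suc_shift by (simp add: power_mult)
  ultimately show ?case by simp
qed simp

lemma sum_power_two_powers_Suc_le:
  fixes t :: real
  assumes "0 \<le> t" and "t \<le> 1/2"
  shows "(\<Sum>m<n. t ^ 2 ^ Suc m) \<le> 19/15 * t\<^sup>2"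
proof -
  have small: "t\<^sup>2 \<le> 1/4"
    using power_mono[OF assms(2) assms(1), of 2] by (simp add: power_divide)
  have "(\<Sum>m<n. t ^ 2 ^ Suc m) = (\<Sum>m<n. (t\<^sup>2) ^ 2 ^ m)" by (simp add: power_mult)
  also have "\<dots> \<le> t\<^sup>2 + 16/15 * (t\<^sup>2)\<^sup>2"
    using small by (intro sum_power_two_powers_le_quarter) auto
  also have "(t\<^sup>2)\<^sup>2 \<le> t\<^sup>2 * (1/4)"
    unfolding power2_eq_square[of "t\<^sup>2"] using small by (intro mult_left_mono) auto
  then have "t\<^sup>2 + 16/15 * (t\<^sup>2)\<^sup>2 \<le> 19/15 * t\<^sup>2" by simp
  finally show ?thesis .
qed

lemma sum_power_two_powers_le_half:
  fixes a :: real
  assumes "0 \<le> a" and "a \<le> 1/2"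
  shows "(\<Sum>m<n. a ^ 2 ^ m) \<le> a + 19/15 * a\<^sup>2"
proof (cases n)
  case (Suc n')
  have "(\<Sum>m<n. a ^ 2 ^ m) = a + (\<Sum>m<n'. a ^ 2 ^ Suc m)"
    unfolding Suc sum.lessThan_Suc_shift by simp
  with sum_power_two_powers_Suc_le[OF assms, of n'] show ?thesis by simp
qed (use assms in simp)

lemma power_two_power_le_power:
  fixes a :: real
  assumes "0 \<le> a" and "a \<le> 1"
  shows "a ^ 2 ^ k \<le> a ^ k"
  using assms by (intro power_decreasing) (auto intro: less_imp_le[OF less_exp])

lemma norm_diff_le_sum_steps:
  fixes x :: "nat \<Rightarrow> 'a::real_normed_vector"
  shows "norm (x (k + n) - x k) \<le> (\<Sum>m<n. norm (x (Suc (k + m)) - x (k + m)))"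
proof -
  have "x (k + n) - x k = (\<Sum>m<n. x (Suc (k + m)) - x (k + m))"
    using sum_lessThan_telescope[of "\<lambda>m. x (k + m)" n] by simp
  then show ?thesis by (simp add: norm_sum)
qed

text \<open>
  The budget for the displacement of all iterates: the first step is at most \<open>sqrt (2 a / \<beta>)\<close>
  by sufficient decrease, and the remaining steps sum to at most
  \<open>(1 + sqrt 2) (\<mu>/\<beta>) 19/15 t\<^sup>2\<close> with \<open>t = \<beta> a / \<mu>\<^sup>2\<close>.
\<close>

lemma radius_budget:
  fixes a \<beta> \<mu> \<epsilon> :: real
  assumes a: "0 \<le> a" and pos: "0 < \<beta>" "0 < \<mu>" "0 \<le> \<epsilon>"
    and a_le: "a \<le> \<beta> * \<epsilon>\<^sup>2 / 25" "a \<le> \<mu>\<^sup>2 / (2 * \<beta>)"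
  shows "sqrt (2 * a / \<beta>) + (1 + sqrt 2) * (\<mu> / \<beta>) * (19/15 * (\<beta> / \<mu>\<^sup>2 * a)\<^sup>2) \<le> \<epsilon> / 2"
proof -
  define \<sigma> u v where "\<sigma> = sqrt 2" and "u = sqrt (a / \<beta>)" and "v = \<beta> * u / \<mu>"
  have \<sigma>: "\<sigma> * \<sigma> = 2" "0 \<le> \<sigma>" by (simp_all add: \<sigma>_def)
  have \<sigma>_le: "\<sigma> \<le> 112/79" unfolding \<sigma>_def by (rule real_le_lsqrt) (auto simp: power2_eq_square)
  have uv: "0 \<le> u" "0 \<le> v" using a pos by (simp_all add: u_def v_def)
  have u_sq: "u\<^sup>2 = a / \<beta>" using a pos by (simp add: u_def)
  have first: "sqrt (2 * a / \<beta>) = \<sigma> * u" by (simp add: \<sigma>_def u_def real_sqrt_mult[symmetric])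
  have "a = \<beta> * u\<^sup>2" using u_sq pos by simp
  then have v_sq: "v\<^sup>2 = \<beta> / \<mu>\<^sup>2 * a" by (simp add: v_def power_mult_distrib power_divide power2_eq_square)
  have "u\<^sup>2 \<le> (\<epsilon> / 5)\<^sup>2" using a_le(1) pos by (simp add: u_sq power_divide field_simps)
  then have u_le: "u \<le> \<epsilon> / 5" by (rule power2_le_imp_le) (use pos(3) in simp)
  have "v\<^sup>2 \<le> 1/2" using a_le(2) pos by (simp add: v_sq field_simps)
  then have "(\<sigma> * v)\<^sup>2 \<le> 1" by (simp add: \<sigma>_def power_mult_distrib)
  then have \<sigma>v: "\<sigma> * v \<le> 1" using power2_le_imp_le[of "\<sigma> * v" 1] by simp
  have v_half: "v \<le> \<sigma> / 2" using mult_left_mono[OF \<sigma>v \<sigma>(2)] \<sigma>(1) by (simp add: mult.assoc[symmetric])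
  have "(\<mu> / \<beta>) * (v\<^sup>2)\<^sup>2 = u * (v * v\<^sup>2)"
    using pos by (simp add: v_def power2_eq_square field_simps)
  also have "\<dots> \<le> u * (v * (1/2))"
    using \<open>v\<^sup>2 \<le> 1/2\<close> uv by (intro mult_left_mono) auto
  finally have second: "(\<mu> / \<beta>) * (v\<^sup>2)\<^sup>2 \<le> u * v / 2" by simp
  have "(1 + \<sigma>) * v \<le> 1 + \<sigma> / 2" using \<sigma>v v_half by (simp add: algebra_simps)
  have "(1 + \<sigma>) * (\<mu> / \<beta>) * (19/15 * (v\<^sup>2)\<^sup>2) = (1 + \<sigma>) * (19/15) * ((\<mu> / \<beta>) * (v\<^sup>2)\<^sup>2)"
    by (simp only: mult_ac)
  also have "\<dots> \<le> (1 + \<sigma>) * (19/15) * (u * v / 2)"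
    using second \<sigma> by (intro mult_left_mono) auto
  finally have "sqrt (2 * a / \<beta>) + (1 + \<sigma>) * (\<mu> / \<beta>) * (19/15 * (v\<^sup>2)\<^sup>2)
      \<le> \<sigma> * u + (1 + \<sigma>) * (19/15) * (u * v / 2)"
    using first by simp
  also have "\<dots> = u * (\<sigma> + 19/30 * ((1 + \<sigma>) * v))" by (simp add: algebra_simps)
  also have "\<dots> \<le> u * (\<sigma> + 19/30 * (1 + \<sigma> / 2))"
    using \<open>(1 + \<sigma>) * v \<le> 1 + \<sigma> / 2\<close> uv by (intro mult_left_mono add_left_mono) auto
  also have "\<dots> \<le> u * (5/2)" using \<sigma>_le uv by (intro mult_left_mono) (auto simp: field_simps)
  also have "\<dots> \<le> \<epsilon> / 2" using u_le by simp
  finally show ?thesis by (simp add: \<sigma>_def v_sq)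
qed

text \<open>With \<open>r = (1/2) powr (2 powr (k - 1))\<close> this turns the tail sum into the bound of the theorem.\<close>

lemma sqrt2_doubly_exponential_estimate:
  fixes r :: real
  assumes r: "0 \<le> r" "r\<^sup>2 \<le> 1/2"
  shows "(1 + sqrt 2) * (r\<^sup>2 + 19/15 * (r\<^sup>2)\<^sup>2) \<le> 2 * sqrt 2 * r"
proof -
  define \<sigma> where "\<sigma> = sqrt 2"
  have \<sigma>: "\<sigma> * \<sigma> = 2" "0 < \<sigma>" by (simp_all add: \<sigma>_def)
  have \<sigma>_le: "\<sigma> \<le> 71/49" unfolding \<sigma>_def by (rule real_le_lsqrt) (auto simp: power2_eq_square)
  have "(\<sigma> * r)\<^sup>2 = 2 * r\<^sup>2" unfolding \<sigma>_def by (simp add: power_mult_distrib)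
  then have \<sigma>r: "\<sigma> * r \<le> 1" using r power2_le_imp_le[of "\<sigma> * r" 1] by simp
  have "49/30 * (1 + \<sigma>) * r * \<sigma> = 49/30 * (\<sigma> * r + \<sigma> * (\<sigma> * r))" by (simp add: algebra_simps)
  also have "\<dots> \<le> 49/30 * (1 + \<sigma>)" using \<sigma>r \<sigma> by (intro mult_left_mono add_mono) auto
  also have "\<dots> \<le> 2 * \<sigma> * \<sigma>" using \<sigma>_le \<sigma>(1) by simp
  finally have key: "49/30 * (1 + \<sigma>) * r \<le> 2 * \<sigma>" using \<sigma>(2) by (rule mult_right_le_imp_le)
  have "(r\<^sup>2)\<^sup>2 \<le> r\<^sup>2 * (1/2)"
    unfolding power2_eq_square[of "r\<^sup>2"] using r(2) by (intro mult_left_mono) auto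
  then have "r\<^sup>2 + 19/15 * (r\<^sup>2)\<^sup>2 \<le> 49/30 * r\<^sup>2" by simp
  then have "(1 + \<sigma>) * (r\<^sup>2 + 19/15 * (r\<^sup>2)\<^sup>2) \<le> (1 + \<sigma>) * (49/30 * r\<^sup>2)"
    using \<sigma> by (intro mult_left_mono) auto
  also have "\<dots> = (49/30 * (1 + \<sigma>) * r) * r" by (simp add: power2_eq_square)
  also have "\<dots> \<le> 2 * \<sigma> * r" using key r(1) by (rule mult_right_mono)
  finally show ?thesis unfolding \<sigma>_def .
qed

text \<open>
  \<open>model c\<close> is the prox-linear model \<open>y \<mapsto> h (F c + \<nabla>F(c) (y - c))\<close>; its approximation error is
  bounded with \<open>\<beta>\<close> in place of \<open>\<rho> \<le> \<beta>\<close>. The space is Euclidean so that nearest points of the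
  closed solution set exist.
\<close>

locale prox_linear_iteration =
  fixes f :: "'a::euclidean_space \<Rightarrow> real" and model :: "'a \<Rightarrow> 'a \<Rightarrow> real"
    and X :: "'a set" and xbar :: 'a and \<epsilon> \<mu> \<beta> :: real and x :: "nat \<Rightarrow> 'a"
  assumes X_closed: "closed X" and f_cont: "continuous_on X f"
    and model_convex: "\<And>c. c \<in> X \<Longrightarrow> convex_on X (model c)"
    and model_approx: "\<And>c y. c \<in> X \<inter> cball xbar \<epsilon> \<Longrightarrow> y \<in> X \<Longrightarrow>
        \<bar>f y - model c y\<bar> \<le> \<beta>/2 * (norm (y - c))\<^sup>2"
    and xbar_min: "xbar \<in> minimizers X f"
    and sharp: "\<And>c. c \<in> X \<inter> cball xbar \<epsilon> \<Longrightarrow> \<mu> * infdist c (minimizers X f) \<le> f c - f xbar"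
    and mu_pos: "0 < \<mu>" and beta_pos: "0 < \<beta>"
    and start: "x 0 \<in> X \<inter> cball xbar (\<epsilon> / 2)"
    and start_gap: "f (x 0) - f xbar \<le> min (\<beta> * \<epsilon>\<^sup>2 / 25) (\<mu>\<^sup>2 / (2 * \<beta>))"
    and step: "\<And>k. x (Suc k) \<in> X \<and> (\<forall>y\<in>X.
        model (x k) (x (Suc k)) + \<beta>/2 * (norm (x (Suc k) - x k))\<^sup>2
          \<le> model (x k) y + \<beta>/2 * (norm (y - x k))\<^sup>2)"
begin

abbreviation Xstar :: "'a set" where "Xstar \<equiv> minimizers X f"

lemma iterate_in_X: "x k \<in> X"
  using start step by (cases k) auto

lemma eps_nonneg: "0 \<le> \<epsilon>"
proof -
  have "dist xbar (x 0) \<le> \<epsilon> / 2" using start by simp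
  then show ?thesis using zero_le_dist[of xbar "x 0"] by linarith
qed

lemma min_le: "y \<in> X \<Longrightarrow> f xbar \<le> f y"
  using xbar_min by (simp add: minimizers_def)

lemma in_Xstar_value: "z \<in> Xstar \<Longrightarrow> f z = f xbar"
  using xbar_min by (auto simp: minimizers_def intro: antisym)

lemma closed_Xstar: "closed Xstar"
  using X_closed f_cont by (rule closed_minimizers)

lemma Xstar_nonempty: "Xstar \<noteq> {}"
  using xbar_min by blast

lemma step_descent:
  assumes "x k \<in> cball xbar \<epsilon>" and "y \<in> X"
  shows "f (x (Suc k)) + \<beta>/2 * (norm (y - x (Suc k)))\<^sup>2 \<le> f y + \<beta> * (norm (y - x k))\<^sup>2"
proof (rule model_step_descent[OF model_convex[OF iterate_in_X]])
  show "\<bar>f y - model (x k) y\<bar> \<le> \<beta>/2 * (norm (y - x k))\<^sup>2" if "y \<in> X" for y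
    using model_approx[OF _ that] assms(1) iterate_in_X by blast
qed (use beta_pos assms(2) step in auto)

lemma step_length_le_gap:
  assumes "x k \<in> cball xbar \<epsilon>"
  shows "\<beta>/2 * (norm (x (Suc k) - x k))\<^sup>2 \<le> f (x k) - f xbar"
  using step_descent[OF assms iterate_in_X[of k]] min_le[OF iterate_in_X[of "Suc k"]]
  by (simp add: norm_minus_commute[of "x k"])

lemma step_descent_nearest_minimizer:
  assumes "x k \<in> cball xbar \<epsilon>"
  obtains z where "norm (z - x k) = infdist (x k) Xstar"
    and "f (x (Suc k)) + \<beta>/2 * (norm (z - x (Suc k)))\<^sup>2 \<le> f xbar + \<beta> * (infdist (x k) Xstar)\<^sup>2"
proof -
  obtain z where z: "z \<in> Xstar" "infdist (x k) Xstar = dist (x k) z"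
    using infdist_attained[OF closed_Xstar Xstar_nonempty] by blast
  have "z \<in> X" using z(1) by (simp add: minimizers_def)
  have "norm (z - x k) = infdist (x k) Xstar"
    using z(2) by (simp add: dist_norm norm_minus_commute[of z])
  with step_descent[OF assms \<open>z \<in> X\<close>] in_Xstar_value[OF z(1)] show thesis
    by (intro that) simp_all
qed

lemma gap_Suc_le:
  assumes "x k \<in> cball xbar \<epsilon>"
  shows "f (x (Suc k)) - f xbar \<le> \<beta> * (infdist (x k) Xstar)\<^sup>2"
proof -
  obtain z where "f (x (Suc k)) + \<beta>/2 * (norm (z - x (Suc k)))\<^sup>2 \<le> f xbar + \<beta> * (infdist (x k) Xstar)\<^sup>2"
    using step_descent_nearest_minimizer[OF assms] by blast
  moreover have "0 \<le> \<beta>/2 * (norm (z - x (Suc k)))\<^sup>2" using beta_pos by simp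
  ultimately show ?thesis by linarith
qed

lemma step_length_le_infdist:
  assumes "x k \<in> cball xbar \<epsilon>"
  shows "norm (x (Suc k) - x k) \<le> (1 + sqrt 2) * infdist (x k) Xstar"
proof -
  obtain z where z: "norm (z - x k) = infdist (x k) Xstar"
    and descent: "f (x (Suc k)) + \<beta>/2 * (norm (z - x (Suc k)))\<^sup>2 \<le> f xbar + \<beta> * (infdist (x k) Xstar)\<^sup>2"
    by (rule step_descent_nearest_minimizer[OF assms])
  have "\<beta>/2 * (norm (z - x (Suc k)))\<^sup>2 \<le> \<beta> * (infdist (x k) Xstar)\<^sup>2"
    using descent min_le[OF iterate_in_X[of "Suc k"]] by linarith
  then have "(norm (z - x (Suc k)))\<^sup>2 \<le> (sqrt 2 * infdist (x k) Xstar)\<^sup>2"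
    using beta_pos by (simp add: power_mult_distrib field_simps)
  then have "norm (z - x (Suc k)) \<le> sqrt 2 * infdist (x k) Xstar"
    by (rule power2_le_imp_le) (simp add: infdist_nonneg)
  moreover have "norm (x (Suc k) - x k) \<le> norm (z - x (Suc k)) + norm (z - x k)"
    using norm_triangle_ineq[of "x (Suc k) - z" "z - x k"] by (simp add: norm_minus_commute[of "x (Suc k)"])
  ultimately show ?thesis using z by (simp add: algebra_simps)
qed

lemma infdist_le_of_scaled: "\<beta> / \<mu> * infdist (x k) Xstar \<le> B \<Longrightarrow> infdist (x k) Xstar \<le> \<mu> / \<beta> * B"
  using mu_pos beta_pos by (simp add: field_simps)

lemma step_length_le_scaled:
  assumes "x k \<in> cball xbar \<epsilon>" and "\<beta> / \<mu> * infdist (x k) Xstar \<le> B"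
  shows "norm (x (Suc k) - x k) \<le> (1 + sqrt 2) * (\<mu> / \<beta>) * B"
proof -
  have "infdist (x k) Xstar \<le> \<mu> / \<beta> * B" using assms(2) by (rule infdist_le_of_scaled)
  then have "(1 + sqrt 2) * infdist (x k) Xstar \<le> (1 + sqrt 2) * (\<mu> / \<beta> * B)"
    by (rule mult_left_mono) simp
  with step_length_le_infdist[OF assms(1)] show ?thesis by (simp add: mult.assoc)
qed

lemma infdist_Suc_le:
  assumes "x k \<in> cball xbar \<epsilon>" and "x (Suc k) \<in> cball xbar \<epsilon>"
  shows "infdist (x (Suc k)) Xstar \<le> \<beta> / \<mu> * (infdist (x k) Xstar)\<^sup>2"
  using sharp[of "x (Suc k)"] gap_Suc_le[OF assms(1)] assms(2) iterate_in_X mu_pos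
  by (simp add: field_simps)

lemma scaled_start_gap: "0 \<le> \<beta> / \<mu>\<^sup>2 * (f (x 0) - f xbar)" "\<beta> / \<mu>\<^sup>2 * (f (x 0) - f xbar) \<le> 1/2"
  using start_gap min_le[OF iterate_in_X] beta_pos mu_pos by (auto simp: field_simps)

lemma scaled_infdist_le_upto:
  assumes "\<forall>i\<le>k. x i \<in> cball xbar \<epsilon>"
  shows "\<beta> / \<mu> * infdist (x k) Xstar \<le> (\<beta> / \<mu>\<^sup>2 * (f (x 0) - f xbar)) ^ 2 ^ k"
  using assms
proof (induction k)
  case 0
  have "\<beta> / \<mu> * infdist (x 0) Xstar = \<beta> / \<mu>\<^sup>2 * (\<mu> * infdist (x 0) Xstar)"
    using mu_pos by (simp add: power2_eq_square)
  also have "\<dots> \<le> \<beta> / \<mu>\<^sup>2 * (f (x 0) - f xbar)"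
    using sharp 0 iterate_in_X beta_pos by (intro mult_left_mono) auto
  finally show ?case by simp
next
  case (Suc k)
  have "\<beta> / \<mu> * infdist (x (Suc k)) Xstar \<le> (\<beta> / \<mu> * infdist (x k) Xstar)\<^sup>2"
    using infdist_Suc_le[of k] Suc.prems mu_pos beta_pos
    by (simp add: field_simps power2_eq_square)
  also have "\<dots> \<le> ((\<beta> / \<mu>\<^sup>2 * (f (x 0) - f xbar)) ^ 2 ^ k)\<^sup>2"
    using Suc mu_pos beta_pos by (intro power_mono) (auto simp: infdist_nonneg)
  finally show ?case by (simp add: power_mult[symmetric] mult.commute)
qed

lemma first_step_le: "norm (x 1 - x 0) \<le> sqrt (2 * (f (x 0) - f xbar) / \<beta>)"
proof -
  have "\<beta>/2 * (norm (x 1 - x 0))\<^sup>2 \<le> f (x 0) - f xbar"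
    using step_length_le_gap[of 0] start eps_nonneg by auto
  then show ?thesis using beta_pos by (intro real_le_rsqrt) (simp add: field_simps)
qed

lemma dist_start_le_upto:
  assumes "\<forall>i\<le>k. x i \<in> cball xbar \<epsilon>"
  shows "norm (x (Suc k) - x 0) \<le> \<epsilon> / 2"
proof -
  define a t C where "a = f (x 0) - f xbar" and "t = \<beta> / \<mu>\<^sup>2 * a"
    and "C = (1 + sqrt 2) * (\<mu> / \<beta>)"
  have steps: "norm (x (Suc (Suc m)) - x (Suc m)) \<le> C * t ^ 2 ^ Suc m" if "m < k" for m
    using step_length_le_scaled scaled_infdist_le_upto[of "Suc m"] assms that
    unfolding C_def t_def a_def by (simp del: power_Suc)
  have "norm (x (Suc k) - x 0) \<le> (\<Sum>m<Suc k. norm (x (Suc m) - x m))"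
    using norm_diff_le_sum_steps[of x 0 "Suc k"] by simp
  also have "\<dots> = norm (x 1 - x 0) + (\<Sum>m<k. norm (x (Suc (Suc m)) - x (Suc m)))"
    unfolding sum.lessThan_Suc_shift by simp
  also have "\<dots> \<le> sqrt (2 * a / \<beta>) + C * (\<Sum>m<k. t ^ 2 ^ Suc m)"
    unfolding sum_distrib_left a_def using first_step_le steps by (intro add_mono sum_mono) auto
  also have "\<dots> \<le> sqrt (2 * a / \<beta>) + C * (19/15 * t\<^sup>2)"
    using sum_power_two_powers_Suc_le[OF scaled_start_gap, of k] mu_pos beta_pos
    unfolding C_def t_def a_def by (intro add_left_mono mult_left_mono) auto
  also have "\<dots> \<le> \<epsilon> / 2"
    unfolding C_def t_def
  proof (rule radius_budget)
    show "0 \<le> a" "a \<le> \<beta> * \<epsilon>\<^sup>2 / 25" "a \<le> \<mu>\<^sup>2 / (2 * \<beta>)"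
      using start_gap min_le[OF iterate_in_X] unfolding a_def by auto
  qed (use eps_nonneg beta_pos mu_pos in auto)
  finally show ?thesis .
qed

lemma iterates_in_cball: "x k \<in> cball xbar \<epsilon>"
proof -
  have "\<forall>i\<le>k. x i \<in> cball xbar \<epsilon>" for k
  proof (induction k)
    case 0 then show ?case using start eps_nonneg by auto
  next
    case (Suc k)
    have "norm (x (Suc k) - xbar) \<le> norm (x (Suc k) - x 0) + norm (x 0 - xbar)"
      using norm_triangle_ineq[of "x (Suc k) - x 0" "x 0 - xbar"] by simp
    also have "\<dots> \<le> \<epsilon>"
      using dist_start_le_upto[OF Suc.IH] start by (simp add: dist_norm norm_minus_commute[of xbar])
    finally have "x (Suc k) \<in> cball xbar \<epsilon>" by (simp add: dist_norm norm_minus_commute[of xbar])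
    then show ?case using Suc.IH le_Suc_eq by auto
  qed
  then show ?thesis by blast
qed

lemma infdist_quadratic: "infdist (x (Suc k)) Xstar \<le> \<beta> / \<mu> * (infdist (x k) Xstar)\<^sup>2"
  using infdist_Suc_le iterates_in_cball by blast

lemma gap_quadratic: "f (x (Suc k)) - f xbar \<le> \<beta> / \<mu>\<^sup>2 * (f (x k) - f xbar)\<^sup>2"
proof -
  have "infdist (x k) Xstar \<le> (f (x k) - f xbar) / \<mu>"
    using sharp[of "x k"] iterates_in_cball iterate_in_X mu_pos by (simp add: field_simps)
  have "f (x (Suc k)) - f xbar \<le> \<beta> * (infdist (x k) Xstar)\<^sup>2"
    by (rule gap_Suc_le[OF iterates_in_cball])
  also have "\<dots> \<le> \<beta> * ((f (x k) - f xbar) / \<mu>)\<^sup>2"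
    using \<open>infdist (x k) Xstar \<le> (f (x k) - f xbar) / \<mu>\<close> beta_pos
    by (intro mult_left_mono power_mono) (auto simp: infdist_nonneg)
  also have "\<dots> = \<beta> / \<mu>\<^sup>2 * (f (x k) - f xbar)\<^sup>2" by (simp add: power_divide)
  finally show ?thesis .
qed

lemma scaled_infdist_le: "\<beta> / \<mu> * infdist (x k) Xstar \<le> (1/2) ^ 2 ^ k"
proof -
  have "\<beta> / \<mu> * infdist (x k) Xstar \<le> (\<beta> / \<mu>\<^sup>2 * (f (x 0) - f xbar)) ^ 2 ^ k"
    using scaled_infdist_le_upto iterates_in_cball by blast
  also have "\<dots> \<le> (1/2) ^ 2 ^ k"
    using scaled_start_gap by (intro power_mono) auto
  finally show ?thesis .
qed

lemma step_length_le: "norm (x (Suc k) - x k) \<le> (1 + sqrt 2) * (\<mu> / \<beta>) * (1/2) ^ 2 ^ k"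
  using step_length_le_scaled[OF iterates_in_cball scaled_infdist_le] .

lemma tail_le: "norm (x k - x (k + n)) \<le> 2 * sqrt 2 * \<mu> / \<beta> * (1/2) powr (2 powr (real k - 1))"
proof -
  define r p where "r = (1/2::real) powr (2 powr (real k - 1))" and "p = (1/2::real) ^ 2 ^ k"
  have "2 powr (real k - 1) * 2 = (2::real) ^ k" by (simp add: powr_diff powr_realpow)
  then have r_sq: "r\<^sup>2 = p" unfolding r_def p_def by (simp add: powr_realpow[symmetric] powr_powr)
  have "p \<le> (1/2) ^ 1" unfolding p_def by (rule power_decreasing) auto
  then have p: "0 \<le> p" "p \<le> 1/2" by (auto simp: p_def)
  have "norm (x k - x (k + n)) \<le> (\<Sum>m<n. norm (x (Suc (k + m)) - x (k + m)))"
    using norm_diff_le_sum_steps[of x k n] by (simp add: norm_minus_commute[of "x k"])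
  also have "\<dots> \<le> (\<Sum>m<n. (1 + sqrt 2) * (\<mu> / \<beta>) * p ^ 2 ^ m)"
  proof (rule sum_mono)
    show "norm (x (Suc (k + m)) - x (k + m)) \<le> (1 + sqrt 2) * (\<mu> / \<beta>) * p ^ 2 ^ m" for m
      using step_length_le[of "k + m"] by (simp add: p_def power_add power_mult)
  qed
  also have "\<dots> = (\<mu> / \<beta>) * ((1 + sqrt 2) * (\<Sum>m<n. p ^ 2 ^ m))"
    by (simp add: sum_distrib_left mult_ac)
  also have "\<dots> \<le> (\<mu> / \<beta>) * ((1 + sqrt 2) * (p + 19/15 * p\<^sup>2))"
    using sum_power_two_powers_le_half[OF p] mu_pos beta_pos by (intro mult_left_mono) auto
  also have "\<dots> \<le> (\<mu> / \<beta>) * (2 * sqrt 2 * r)"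
    using sqrt2_doubly_exponential_estimate[of r] r_sq p mu_pos beta_pos
    by (intro mult_left_mono) (auto simp: r_def)
  finally show ?thesis by (simp add: r_def field_simps)
qed

lemma converges_to_minimizer:
  obtains xinf where "xinf \<in> Xstar" and "x \<longlonglongrightarrow> xinf"
    and "\<And>k. norm (x k - xinf) \<le> 2 * sqrt 2 * \<mu> / \<beta> * (1/2) powr (2 powr (real k - 1))"
proof -
  define D where "D k = x (Suc k) - x k" for k
  have "summable (\<lambda>k. (1 + sqrt 2) * (\<mu> / \<beta>) * (1/2::real) ^ k)"
    by (intro summable_mult summable_geometric) simp
  moreover have "norm (D k) \<le> (1 + sqrt 2) * (\<mu> / \<beta>) * (1/2::real) ^ k" for k
  proof -
    have "(1/2::real) ^ 2 ^ k \<le> (1/2) ^ k" by (rule power_two_power_le_power) auto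
    then have "(1 + sqrt 2) * (\<mu> / \<beta>) * (1/2) ^ 2 ^ k \<le> (1 + sqrt 2) * (\<mu> / \<beta>) * (1/2::real) ^ k"
      by (rule mult_left_mono) (use mu_pos beta_pos in simp)
    then show ?thesis unfolding D_def by (rule order_trans[OF step_length_le])
  qed
  ultimately have "summable D" by (rule summable_comparison_test'[where N = 0])
  define xinf where "xinf = x 0 + suminf D"
  have "(\<lambda>n. x 0 + (\<Sum>k<n. D k)) \<longlonglongrightarrow> xinf"
    unfolding xinf_def by (intro tendsto_add tendsto_const summable_LIMSEQ \<open>summable D\<close>)
  moreover have "(\<lambda>n. x 0 + (\<Sum>k<n. D k)) = x"
    by (simp add: D_def sum_lessThan_telescope)
  ultimately have conv: "x \<longlonglongrightarrow> xinf" by simp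
  have "(\<lambda>k. infdist (x k) Xstar) \<longlonglongrightarrow> infdist xinf Xstar" by (intro tendsto_infdist conv)
  moreover have "(\<lambda>k. (\<mu> / \<beta>) * (1/2::real) ^ k) \<longlonglongrightarrow> 0"
    by (intro tendsto_mult_right_zero LIMSEQ_realpow_zero) auto
  moreover have "infdist (x k) Xstar \<le> (\<mu> / \<beta>) * (1/2::real) ^ k" for k
  proof -
    have "infdist (x k) Xstar \<le> (\<mu> / \<beta>) * (1/2) ^ 2 ^ k"
      by (rule infdist_le_of_scaled[OF scaled_infdist_le])
    also have "\<dots> \<le> (\<mu> / \<beta>) * (1/2) ^ k"
      using mu_pos beta_pos by (intro mult_left_mono power_two_power_le_power) auto
    finally show ?thesis .
  qed
  ultimately have "infdist xinf Xstar \<le> 0" by (intro LIMSEQ_le) auto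
  then have "xinf \<in> Xstar"
    using in_closed_iff_infdist_zero[OF closed_Xstar Xstar_nonempty] infdist_nonneg[of xinf Xstar] by simp
  moreover have "norm (x k - xinf) \<le> 2 * sqrt 2 * \<mu> / \<beta> * (1/2) powr (2 powr (real k - 1))" for k
  proof (rule Lim_bounded)
    have "(\<lambda>n. x (k + n)) \<longlonglongrightarrow> xinf"
      using LIMSEQ_ignore_initial_segment[OF conv, of k] by (simp add: add.commute)
    then show "(\<lambda>n. norm (x k - x (k + n))) \<longlonglongrightarrow> norm (x k - xinf)"
      by (intro tendsto_intros)
  qed (use tail_le in auto)
  ultimately show thesis using conv that by blast
qed

end

lemma prox_linear_iteration_composite:
  fixes h :: "'y::euclidean_space \<Rightarrow> real" and F :: "'e::euclidean_space \<Rightarrow> 'y"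
  assumes "closed X" and "convex X" and h_convex: "convex_on UNIV h"
    and F_deriv: "\<And>z. (F has_derivative F' z) (at z)"
    and "xbar \<in> minimizers X (\<lambda>z. h (F z))"
    and approx: "\<And>c y. c \<in> X \<inter> cball xbar \<epsilon> \<Longrightarrow> y \<in> X \<Longrightarrow>
        \<bar>h (F y) - h (F c + F' c (y - c))\<bar> \<le> \<rho> / 2 * (norm (y - c))\<^sup>2"
    and "\<And>c. c \<in> X \<inter> cball xbar \<epsilon> \<Longrightarrow>
        \<mu> * infdist c (minimizers X (\<lambda>z. h (F z))) \<le> h (F c) - h (F xbar)"
    and "\<rho> \<le> \<beta>" and "0 < \<rho>" and "0 < \<mu>"
    and "x 0 \<in> X \<inter> cball xbar (\<epsilon> / 2)"
    and "h (F (x 0)) - h (F xbar) \<le> min (\<beta> * \<epsilon>\<^sup>2 / 25) (\<mu>\<^sup>2 / (2 * \<beta>))"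
    and "\<And>k. x (Suc k) \<in> X \<and>
        (\<forall>y\<in>X. h (F (x k) + F' (x k) (x (Suc k) - x k)) + \<beta> / 2 * (norm (x (Suc k) - x k))\<^sup>2
               \<le> h (F (x k) + F' (x k) (y - x k)) + \<beta> / 2 * (norm (y - x k))\<^sup>2)"
  shows "prox_linear_iteration (\<lambda>z. h (F z)) (\<lambda>c y. h (F c + F' c (y - c))) X xbar \<epsilon> \<mu> \<beta> x"
proof
  have "isCont h z" for z
    using convex_on_continuous[OF open_UNIV h_convex] continuous_on_eq_continuous_at[OF open_UNIV]
    by blast
  moreover have "isCont F z" for z
    using F_deriv[of z] has_derivative_continuous by blast
  ultimately show "continuous_on X (\<lambda>z. h (F z))"
    using isCont_o2 by (intro continuous_at_imp_continuous_on) blast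
  show "convex_on X (\<lambda>y. h (F c + F' c (y - c)))" for c
    using h_convex has_derivative_linear[OF F_deriv] \<open>convex X\<close> by (rule convex_on_affine_comp)
  show "\<bar>h (F y) - h (F c + F' c (y - c))\<bar> \<le> \<beta>/2 * (norm (y - c))\<^sup>2"
    if "c \<in> X \<inter> cball xbar \<epsilon>" and "y \<in> X" for c y
  proof -
    have "\<rho> / 2 * (norm (y - c))\<^sup>2 \<le> \<beta> / 2 * (norm (y - c))\<^sup>2"
      using \<open>\<rho> \<le> \<beta>\<close> by (intro mult_right_mono) auto
    with approx[OF that] show ?thesis by linarith
  qed
  show "0 < \<beta>" using \<open>\<rho> \<le> \<beta>\<close> \<open>0 < \<rho>\<close> by simp
qed (use assms in auto)

theorem theorem5p7:
  fixes h :: "'y::euclidean_space \<Rightarrow> real"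
    and F :: "'e::euclidean_space \<Rightarrow> 'y"
    and F' :: "'e \<Rightarrow> ('e \<Rightarrow> 'y)"
    and X :: "'e set"
    and xbar x0 :: 'e
    and \<epsilon> \<mu> \<rho> \<beta> :: real
    and x :: "nat \<Rightarrow> 'e"
  assumes X_ne: "X \<noteq> {}" and X_closed: "closed X" and X_convex: "convex X"
    and h_convex: "convex_on UNIV h"
    and F_deriv: "\<And>z. (F has_derivative F' z) (at z)"
    and Xstar_ne: "{z \<in> X. \<forall>y\<in>X. h (F z) \<le> h (F y)} \<noteq> {}"
    and xbar: "xbar \<in> {z \<in> X. \<forall>y\<in>X. h (F z) \<le> h (F y)}"
    and pos: "\<epsilon> > 0" "\<mu> > 0" "\<rho> > 0"
    and approx: "\<And>z y. z \<in> X \<inter> cball xbar \<epsilon> \<Longrightarrow> y \<in> X \<Longrightarrow>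
        \<bar>h (F y) - h (F z + F' z (y - z))\<bar> \<le> \<rho> / 2 * (norm (y - z))\<^sup>2"
    and sharp: "\<And>z. z \<in> X \<inter> cball xbar \<epsilon> \<Longrightarrow>
        h (F z) - (INF y\<in>X. h (F y)) \<ge> \<mu> * infdist z {z \<in> X. \<forall>y\<in>X. h (F z) \<le> h (F y)}"
    and beta: "\<beta> \<ge> \<rho>"
    and x0: "x0 \<in> cball xbar (\<epsilon> / 2) \<inter> X"
    and x0_gap: "h (F x0) - h (F xbar) \<le> min (\<beta> * \<epsilon>\<^sup>2 / 25) (\<mu>\<^sup>2 / (2 * \<beta>))"
    and x_0: "x 0 = x0"
    and x_step: "\<And>k. x (Suc k) \<in> X \<and>
        (\<forall>y\<in>X. h (F (x k) + F' (x k) (x (Suc k) - x k)) + \<beta> / 2 * (norm (x (Suc k) - x k))\<^sup>2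
               \<le> h (F (x k) + F' (x k) (y - x k)) + \<beta> / 2 * (norm (y - x k))\<^sup>2)"
  shows "(\<forall>k. x k \<in> cball xbar \<epsilon>)
    \<and> (\<forall>k. infdist (x (Suc k)) {z \<in> X. \<forall>y\<in>X. h (F z) \<le> h (F y)}
            \<le> \<beta> / \<mu> * (infdist (x k) {z \<in> X. \<forall>y\<in>X. h (F z) \<le> h (F y)})\<^sup>2)
    \<and> (\<forall>k. h (F (x (Suc k))) - h (F xbar) \<le> \<beta> / \<mu>\<^sup>2 * (h (F (x k)) - h (F xbar))\<^sup>2)
    \<and> (\<exists>xinf \<in> {z \<in> X. \<forall>y\<in>X. h (F z) \<le> h (F y)}. x \<longlonglongrightarrow> xinf \<and>
        (\<forall>k. norm (x k - xinf) \<le> 2 * sqrt 2 * \<mu> / \<beta> * (1/2) powr (2 powr (real k - 1))))"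
proof -
  let ?f = "\<lambda>z. h (F z)"
  have Xstar: "{z \<in> X. \<forall>y\<in>X. h (F z) \<le> h (F y)} = minimizers X ?f"
    by (simp add: minimizers_def)
  have inf_value: "(INF y\<in>X. h (F y)) = h (F xbar)"
    using xbar by (intro cInf_eq_minimum) auto
  interpret prox_linear_iteration ?f "\<lambda>c y. h (F c + F' c (y - c))" X xbar \<epsilon> \<mu> \<beta> x
  proof (rule prox_linear_iteration_composite[where \<rho> = \<rho>])
    show "x (Suc k) \<in> X \<and> (\<forall>y\<in>X. h (F (x k) + F' (x k) (x (Suc k) - x k))
        + \<beta> / 2 * (norm (x (Suc k) - x k))\<^sup>2 \<le> h (F (x k) + F' (x k) (y - x k))
        + \<beta> / 2 * (norm (y - x k))\<^sup>2)" for k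
      by (rule x_step)
    show "xbar \<in> minimizers X ?f" using xbar Xstar by simp
    show "\<mu> * infdist c (minimizers X ?f) \<le> h (F c) - h (F xbar)" if "c \<in> X \<inter> cball xbar \<epsilon>" for c
      using sharp[OF that] unfolding inf_value Xstar .
    show "x 0 \<in> X \<inter> cball xbar (\<epsilon> / 2)" using x0 x_0 by simp
    show "h (F (x 0)) - h (F xbar) \<le> min (\<beta> * \<epsilon>\<^sup>2 / 25) (\<mu>\<^sup>2 / (2 * \<beta>))"
      using x0_gap x_0 by simp
    show "\<rho> \<le> \<beta>" "0 < \<rho>" "0 < \<mu>" using beta pos by simp_all
  qed (rule X_closed X_convex h_convex F_deriv approx)+
  obtain xinf where "xinf \<in> Xstar" "x \<longlonglongrightarrow> xinf"
    "\<And>k. norm (x k - xinf) \<le> 2 * sqrt 2 * \<mu> / \<beta> * (1/2) powr (2 powr (real k - 1))"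
    using converges_to_minimizer by blast
  then show ?thesis
    unfolding Xstar using iterates_in_cball infdist_quadratic gap_quadratic by blast
qed

end
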